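(* Take $\Omega=(0,\infty)$. For any $\delta\in(0,1]$ and any interval $(\alpha,\beta]$ with $0\le\alpha<\beta\le1$, there exist a non-negative integer $m$ and intervals $I,J_1,\dots,J_m$ such that $$(\alpha,\beta]\preceq I\cup J_1\cup\dots\cup J_m,$$ $I\subseteq(0,\delta/2]$, $J_i\subseteq(\delta/2,1]$ for each $1\le i\le m$, and the lengths satisfy $$|I|+\sum_{i=1}^m|J_i|=\beta-\alpha,\qquad |I|>\frac{\delta}{4}(\beta-\alpha).$$
   Context: Let $\Omega$ be either $(0,\infty)$ or $D=\mathbb{C}\setminus\{0,-1,-2,\dots\}$. An admissible instance (relative to $\Omega$) is one of the following finite lists of points, all entries of which are required to lie in $\Omega$: (i) $(z+1,\,z)$ for $z\in\Omega$ with $z+1\in\Omega$ (corresponding to the identity $\Gamma(z+1)=z\Gamma(z)$); (ii) $(z,\,1-z)$ for $z\in\Omega\setminus\mathbb{Z}$ with $1-z\in\Omega$ (corresponding to $\Gamma(z)\Gamma(1-z)=\pi/\sin(\pi z)$); (iii) for an integer $n\ge 2$, $\big(z,\,\tfrac{z}{n},\,\tfrac{z+1}{n},\dots,\tfrac{z+n-1}{n}\big)$ (corresponding to Gauss's multiplication formula $(2\pi)^{(n-1)/2}n^{1/2-z}\Gamma(z)=\prod_{j=0}^{n-1}\Gamma(\tfrac{z+j}{n})$). For $B\subseteq\Omega$, a point $p\in\Omega$ is obtained from $B$ in one step if there is an admissible instance in which $p$ occurs exactly once as an entry and every other entry lies in $B$. Set $B_0=B$, $B_{i+1}=B_i\cup\{p: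 p \text{ obtained from } B_i \text{ in one step}\}$, and $\mathrm{Cl}_\Omega(B)=\bigcup_{i\ge0}B_i$ (the set of points at which the value of $\Gamma$ is determined by its values on $B$ via finitely many applications of the identities). For $A,B\subseteq\Omega$ write $A\preceq B$ if $A\subseteq \mathrm{Cl}_\Omega(B)$. A set $S\subseteq\Omega$ is a fundamental set (for $\Gamma$ on $\Omega$) if $\mathrm{Cl}_\Omega(S)=\Omega$. $|I|$ denotes the length of an interval $I$. *)

theory Defs
  imports "HOL-Analysis.Analysis"
begin

definition Omega :: "real set" where
  "Omega = {0<..}"

definition admissible :: "real list set" where
  "admissible =
     {l. set l \<subseteq> Omega \<and>
        ((\<exists>z. l = [z + 1, z]) \<or>
         (\<exists>z. z \<notin> \<int> \<and> l = [z, 1 - z]) \<or>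
         (\<exists>z (n::nat). n \<ge> 2 \<and> l = z # map (\<lambda>j. (z + real j) / real n) [0..<n]))}"

definition one_step :: "real set \<Rightarrow> real set" where
  "one_step B = {p. p \<in> Omega \<and> (\<exists>l\<in>admissible. count_list l p = 1 \<and>
                     (\<forall>q\<in>set l. q \<noteq> p \<longrightarrow> q \<in> B))}"

definition step_cl :: "real set \<Rightarrow> real set" where
  "step_cl B = B \<union> one_step B"

definition Cl :: "real set \<Rightarrow> real set" where
  "Cl B = (\<Union>i. (step_cl ^^ i) B)"

definition preceq :: "real set \<Rightarrow> real set \<Rightarrow> bool" where
  "preceq A B \<longleftrightarrow> A \<subseteq> Cl B"

definition ilen :: "real set \<Rightarrow> real" where
  "ilen I = (if I = {} then 0 else Sup I - Inf I)"

end

theory Submission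
  imports Defs
begin

text \<open>
  Gauss's duplication formula determines \<open>\<Gamma>(x)\<close> from \<open>\<Gamma>(x/2)\<close> and \<open>\<Gamma>((x+1)/2)\<close>, so
  \<open>(a,b] \<preceq> (a/2,b/2] \<union> (a/2+1/2,b/2+1/2]\<close>. Applying this \<open>k\<close> times to the lower half
  gives \<open>(\<alpha>,\<beta>] \<preceq> (\<alpha>/2\<^sup>k,\<beta>/2\<^sup>k] \<union> J\<^sub>1 \<union> \<dots> \<union> J\<^sub>k\<close> with \<open>J\<^sub>i = (\<alpha>/2\<^sup>i+1/2,\<beta>/2\<^sup>i+1/2] \<subseteq> (1/2,1]\<close>;
  the lengths halve at each step, so they add up to \<open>\<beta>-\<alpha>\<close>. Choosing \<open>k\<close> with
  \<open>2 \<le> \<delta>2\<^sup>k < 4\<close> puts the first interval inside \<open>(0,\<delta>/2]\<close> and keeps its length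
  \<open>(\<beta>-\<alpha>)/2\<^sup>k\<close> above \<open>\<delta>(\<beta>-\<alpha>)/4\<close>.
\<close>

lemma one_step_mono: "B \<subseteq> C \<Longrightarrow> one_step B \<subseteq> one_step C"
  unfolding one_step_def by blast

lemma step_cl_mono: "B \<subseteq> C \<Longrightarrow> step_cl B \<subseteq> step_cl C"
  unfolding step_cl_def using one_step_mono by blast

lemma funpow_step_cl_mono: "m \<le> n \<Longrightarrow> (step_cl ^^ m) B \<subseteq> (step_cl ^^ n) B"
proof (induction n rule: dec_induct)
  case (step n)
  then show ?case by (auto simp: step_cl_def)
qed simp

lemma funpow_step_cl_subset_Cl: "(step_cl ^^ n) B \<subseteq> Cl B"
  unfolding Cl_def by blast

lemma subset_Cl: "B \<subseteq> Cl B"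
  using funpow_step_cl_subset_Cl[of 0] by simp

lemma step_cl_subset_Cl: "step_cl B \<subseteq> Cl B"
  using funpow_step_cl_subset_Cl[of 1] by simp

lemma Cl_mono: "B \<subseteq> C \<Longrightarrow> Cl B \<subseteq> Cl C"
proof -
  assume "B \<subseteq> C"
  then have "(step_cl ^^ n) B \<subseteq> (step_cl ^^ n) C" for n
    by (induction n) (auto dest: step_cl_mono)
  then show ?thesis unfolding Cl_def by blast
qed

lemma finite_subset_Cl_iterate:
  assumes "finite F" "F \<subseteq> Cl B"
  shows "\<exists>n. F \<subseteq> (step_cl ^^ n) B"
  using assms
proof (induction F rule: finite_induct)
  case (insert x F)
  then obtain n where n: "F \<subseteq> (step_cl ^^ n) B" by auto
  from insert.prems obtain m where m: "x \<in> (step_cl ^^ m) B" unfolding Cl_def by auto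
  have "insert x F \<subseteq> (step_cl ^^ max m n) B"
    using n m funpow_step_cl_mono[of m "max m n" B] funpow_step_cl_mono[of n "max m n" B] by auto
  then show ?case ..
qed simp

text \<open>An admissible instance is a finite list, so its other entries all lie in a single iterate.\<close>

lemma one_step_Cl: "one_step (Cl B) \<subseteq> Cl B"
proof
  fix p assume "p \<in> one_step (Cl B)"
  then obtain l where l: "p \<in> Omega" "l \<in> admissible" "count_list l p = 1"
    and others: "\<forall>q\<in>set l. q \<noteq> p \<longrightarrow> q \<in> Cl B"
    unfolding one_step_def by blast
  obtain n where "set l - {p} \<subseteq> (step_cl ^^ n) B"
    using finite_subset_Cl_iterate[of "set l - {p}" B] others by blast
  then have "p \<in> one_step ((step_cl ^^ n) B)"
    using l unfolding one_step_def by blast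
  then have "p \<in> (step_cl ^^ Suc n) B" by (simp add: step_cl_def)
  then show "p \<in> Cl B" unfolding Cl_def by blast
qed

lemma Cl_idem: "Cl (Cl B) = Cl B"
proof
  have "(step_cl ^^ n) (Cl B) \<subseteq> Cl B" for n
  proof (induction n)
    case (Suc n)
    then show ?case
      using one_step_mono[OF Suc.IH] one_step_Cl[of B] by (auto simp: step_cl_def)
  qed (simp add: subset_Cl)
  then show "Cl (Cl B) \<subseteq> Cl B" unfolding Cl_def[of "Cl B"] by blast
qed (rule subset_Cl)

lemma preceq_trans: "preceq A B \<Longrightarrow> preceq B C \<Longrightarrow> preceq A C"
  unfolding preceq_def using Cl_mono[of B "Cl C"] Cl_idem[of C] by blast

lemma preceq_Un_right:
  assumes "preceq A A'"
  shows "preceq (A \<union> B) (A' \<union> B)"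
  using assms Cl_mono[of A' "A' \<union> B"] Cl_mono[of B "A' \<union> B"] subset_Cl[of B]
  unfolding preceq_def by blast

lemma duplication_one_step:
  assumes "0 < x" "x \<noteq> 1" "x/2 \<in> C" "(x+1)/2 \<in> C"
  shows "x \<in> one_step C"
proof -
  let ?l = "[x, x/2, (x+1)/2]"
  have "\<exists>z (n::nat). n \<ge> 2 \<and> ?l = z # map (\<lambda>j. (z + real j) / real n) [0..<n]"
    by (rule exI[of _ x], rule exI[of _ "2::nat"]) (simp add: upt_rec)
  moreover have "set ?l \<subseteq> Omega" using assms(1) by (auto simp: Omega_def)
  ultimately have "?l \<in> admissible" unfolding admissible_def by blast
  moreover have "count_list ?l x = 1" using assms(1,2) by simp
  moreover have "\<forall>q\<in>set ?l. q \<noteq> x \<longrightarrow> q \<in> C" using assms(3,4) by auto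
  moreover have "x \<in> Omega" using assms(1) by (simp add: Omega_def)
  ultimately show ?thesis unfolding one_step_def by blast
qed

text \<open>At \<open>x = 1\<close> the duplication instance \<open>[1, 1/2, 1]\<close> contains \<open>x\<close> twice; there \<open>1\<close> lies in the upper half itself.\<close>

lemma preceq_halves:
  fixes a b :: real
  assumes "0 \<le> a"
  shows "preceq {a<..b} ({a/2<..b/2} \<union> {a/2 + 1/2<..b/2 + 1/2})"
    (is "preceq _ ?C")
proof -
  have "{a<..b} \<subseteq> step_cl ?C"
  proof
    fix x assume x: "x \<in> {a<..b}"
    show "x \<in> step_cl ?C"
    proof (cases "x = 1")
      case True
      then show ?thesis using x by (auto simp: step_cl_def)
    next
      case False
      have "x/2 \<in> ?C" "(x+1)/2 \<in> ?C" using x by (auto simp: field_simps)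
      then show ?thesis
        using duplication_one_step[of x ?C] False x assms unfolding step_cl_def by auto
    qed
  qed
  then show ?thesis unfolding preceq_def using step_cl_subset_Cl by blast
qed

lemma preceq_dyadic_decomposition:
  fixes \<alpha> \<beta> :: real
  assumes "0 \<le> \<alpha>"
  shows "preceq {\<alpha><..\<beta>}
           ({\<alpha>/2^k<..\<beta>/2^k} \<union> (\<Union>i\<in>{1..k}. {\<alpha>/2^i + 1/2<..\<beta>/2^i + 1/2}))"
proof (induction k)
  case 0
  show ?case unfolding preceq_def by (simp add: subset_Cl)
next
  case (Suc k)
  let ?J = "\<lambda>i::nat. {\<alpha>/2^i + 1/2<..\<beta>/2^i + 1/2}"
  have "preceq {\<alpha>/2^k<..\<beta>/2^k} ({\<alpha>/2^Suc k<..\<beta>/2^Suc k} \<union> ?J (Suc k))"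
    using preceq_halves[of "\<alpha>/2^k" "\<beta>/2^k"] assms by (simp add: field_simps)
  then have "preceq ({\<alpha>/2^k<..\<beta>/2^k} \<union> (\<Union>i\<in>{1..k}. ?J i))
               (({\<alpha>/2^Suc k<..\<beta>/2^Suc k} \<union> ?J (Suc k)) \<union> (\<Union>i\<in>{1..k}. ?J i))"
    by (rule preceq_Un_right)
  then have "preceq ({\<alpha>/2^k<..\<beta>/2^k} \<union> (\<Union>i\<in>{1..k}. ?J i))
               ({\<alpha>/2^Suc k<..\<beta>/2^Suc k} \<union> (\<Union>i\<in>{1..Suc k}. ?J i))"
    by (simp add: atLeastAtMostSuc_conv Un_assoc del: power_Suc)
  with Suc.IH show ?case by (rule preceq_trans)
qed

lemma ilen_greaterThanAtMost: "(a::real) < b \<Longrightarrow> ilen {a<..b} = b - a"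
  unfolding ilen_def by auto

lemma ilen_dyadic_interval:
  fixes \<alpha> \<beta> c :: real
  assumes "\<alpha> < \<beta>"
  shows "ilen {\<alpha>/2^i + c<..\<beta>/2^i + c} = (\<beta> - \<alpha>) / 2^i"
  using assms by (subst ilen_greaterThanAtMost) (auto simp: divide_strict_right_mono diff_divide_distrib)

lemma dyadic_geometric_sum: "(d::real) / 2^k + (\<Sum>i=1..k. d / 2^i) = d"
proof (induction k)
  case (Suc k)
  have "d / 2^Suc k + (\<Sum>i=1..Suc k. d / 2^i) = d / 2^k + (\<Sum>i=1..k. d / 2^i)"
    by simp
  with Suc.IH show ?case by simp
qed simp

lemma ilen_dyadic_decomposition:
  fixes \<alpha> \<beta> :: real
  assumes "\<alpha> < \<beta>"
  shows "ilen {\<alpha>/2^k<..\<beta>/2^k} + (\<Sum>i=1..k. ilen {\<alpha>/2^i + 1/2<..\<beta>/2^i + 1/2}) = \<beta> - \<alpha>"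
  using dyadic_geometric_sum[of "\<beta> - \<alpha>" k] ilen_dyadic_interval[OF assms, where c = 0]
    ilen_dyadic_interval[OF assms, where c = "1/2"]
  by simp

lemma dyadic_interval_subset_lower:
  fixes \<alpha> \<beta> \<delta> :: real
  assumes "0 \<le> \<alpha>" "\<beta> \<le> 1" "2 \<le> \<delta> * 2^k"
  shows "{\<alpha>/2^k<..\<beta>/2^k} \<subseteq> {0<..\<delta>/2}"
proof -
  have "\<beta>/2^k \<le> \<delta>/2"
    using assms(2,3) by (simp add: field_simps)
  moreover have "0 \<le> \<alpha>/2^k" using assms(1) by simp
  ultimately show ?thesis
    unfolding subset_iff greaterThanAtMost_iff by (metis le_less_trans order_trans)
qed

lemma dyadic_interval_subset_upper:
  fixes \<alpha> \<beta> \<delta> :: real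
  assumes "0 \<le> \<alpha>" "\<beta> \<le> 1" "\<delta> \<le> 1" "i \<ge> 1"
  shows "{\<alpha>/2^i + 1/2<..\<beta>/2^i + 1/2} \<subseteq> {\<delta>/2<..1}"
proof -
  have "\<beta> \<le> 2^(i-1)" using assms(2) one_le_power[of "2::real" "i-1"] by linarith
  then have "\<beta>/2^i \<le> 1/2" using assms(4) by (cases i) (auto simp: field_simps)
  moreover have "0 \<le> \<alpha>/2^i" using assms(1) by simp
  ultimately show ?thesis
    using assms(3) unfolding subset_iff greaterThanAtMost_iff by (intro allI impI conjI; linarith)
qed

lemma exists_dyadic_scale:
  fixes \<delta> :: real
  assumes "0 < \<delta>" "\<delta> \<le> 1"
  shows "\<exists>k::nat. 2 \<le> \<delta> * 2^k \<and> \<delta> * 2^k < 4"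
proof -
  obtain n where "2/\<delta> < 2^n" using real_arch_pow[of 2 "2/\<delta>"] by auto
  then have ex: "\<exists>k::nat. 2 \<le> \<delta> * 2^k" using assms(1) by (auto simp: field_simps intro: less_imp_le)
  define k where "k = (LEAST k::nat. 2 \<le> \<delta> * 2^k)"
  have k: "2 \<le> \<delta> * 2^k" unfolding k_def by (rule LeastI_ex[OF ex])
  then have "k \<noteq> 0" using assms(2) by (intro notI) simp
  then obtain j where j: "k = Suc j" using not0_implies_Suc by blast
  have "\<not> 2 \<le> \<delta> * 2^j"
    using not_less_Least[of j "\<lambda>k. 2 \<le> \<delta> * 2^k"] j unfolding k_def by simp
  then have "\<delta> * 2^k < 4" using j by simp
  with k show ?thesis by blast
qed

theorem mainTheorem7:
  fixes \<delta> \<alpha> \<beta> :: real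
  assumes "0 < \<delta>" and "\<delta> \<le> 1"
    and "0 \<le> \<alpha>" and "\<alpha> < \<beta>" and "\<beta> \<le> 1"
  shows "\<exists>(m::nat) (I::real set) (J::nat \<Rightarrow> real set).
           is_interval I \<and> (\<forall>i\<in>{1..m}. is_interval (J i)) \<and>
           preceq {\<alpha><..\<beta>} (I \<union> (\<Union>i\<in>{1..m}. J i)) \<and>
           I \<subseteq> {0<..\<delta>/2} \<and> (\<forall>i\<in>{1..m}. J i \<subseteq> {\<delta>/2<..1}) \<and>
           ilen I + (\<Sum>i=1..m. ilen (J i)) = \<beta> - \<alpha> \<and>
           ilen I > \<delta>/4 * (\<beta> - \<alpha>)"
proof -
  obtain k :: nat where k: "2 \<le> \<delta> * 2^k" "\<delta> * 2^k < 4"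
    using exists_dyadic_scale assms(1,2) by blast
  define I where "I = {\<alpha>/2^k<..\<beta>/2^k}"
  define J where "J i = {\<alpha>/2^i + 1/2<..\<beta>/2^i + 1/2}" for i :: nat
  have "ilen I = (\<beta> - \<alpha>) / 2^k"
    using ilen_dyadic_interval[OF assms(4), of k 0] by (simp add: I_def)
  moreover have "(\<beta> - \<alpha>) * (\<delta> * 2^k) < (\<beta> - \<alpha>) * 4"
    using k(2) assms(4) by (intro mult_strict_left_mono) auto
  then have "\<delta>/4 * (\<beta> - \<alpha>) < (\<beta> - \<alpha>) / 2^k"
    by (simp add: field_simps)
  ultimately have "ilen I > \<delta>/4 * (\<beta> - \<alpha>)"
    by simp
  then show ?thesis
    using preceq_dyadic_decomposition[OF assms(3), of \<beta> k] ilen_dyadic_decomposition[OF assms(4), of k]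
      dyadic_interval_subset_lower[OF assms(3,5) k(1)] dyadic_interval_subset_upper[OF assms(3,5,2)]
    by (intro exI[of _ k] exI[of _ I] exI[of _ J]) (auto simp: I_def J_def is_interval_oc)
qed

end
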